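(* On $\mathbb R^8$ with coframe $e^0,\dots,e^7$, let $\Omega=(e^4+ie^0)\wedge(e^1+ie^5)\wedge(e^2+ie^6)\wedge(e^3+ie^7)$, $\omega=e^{15}+e^{26}+e^{37}+e^{40}$, and for $\tau\in\mathbb R$ let $\Phi_\tau=\cosh(2\tau)\mathrm{Re}(\Omega)-\tfrac12\omega\wedge\omega+i\sinh(2\tau)\mathrm{Im}(\Omega)$. For $\tau\neq0$, the stabiliser of $\Phi_\tau$ in $\mathrm{GL}(8,\mathbb R)$ (acting by pullback) is the group $\mathrm{SU}(4)$ of linear maps preserving the Euclidean metric $g=\sum_a(e^a)^2$, $\omega$ and $\Omega$.
   Context: Notation: $e^{ab}=e^a\wedge e^b$. For $\tau=0$, $\Phi_0$ is the (real) Cayley form, whose stabiliser is $\mathrm{Spin}(7)$. *)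

theory Defs
  imports "HOL-Analysis.Analysis"
begin

text \<open>Vectors of R^8 are real^8 with components indexed by the numeral type 8 = {0,...,7}.
  Complex-valued k-forms are represented as alternating multilinear functions of k vectors.\<close>

type_synonym form1 = "real^8 \<Rightarrow> complex"
type_synonym form2 = "real^8 \<Rightarrow> real^8 \<Rightarrow> complex"
type_synonym form4 = "real^8 \<Rightarrow> real^8 \<Rightarrow> real^8 \<Rightarrow> real^8 \<Rightarrow> complex"

definition cof :: "8 \<Rightarrow> form1" where
  "cof a = (\<lambda>v. complex_of_real (v $ a))"

definition wedge11 :: "form1 \<Rightarrow> form1 \<Rightarrow> form2" where
  "wedge11 \<alpha> \<beta> = (\<lambda>v w. \<alpha> v * \<beta> w - \<alpha> w * \<beta> v)"

text \<open>Wedge of 2-forms: (a \<and> b)(v_0..v_3) = 1/(2!2!) sum_sigma sgn(sigma) a(v_s0,v_s1) b(v_s2,v_s3),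
  so that e^{ab} \<and> e^{cd} = e^{abcd}.\<close>
definition wedge22 :: "form2 \<Rightarrow> form2 \<Rightarrow> form4" where
  "wedge22 \<alpha> \<beta> = (\<lambda>v0 v1 v2 v3. let v = [v0, v1, v2, v3] in
     (1/4) * (\<Sum>\<sigma>\<in>{\<sigma>. \<sigma> permutes {..<4::nat}}.
        of_int (sign \<sigma>) * \<alpha> (v ! \<sigma> 0) (v ! \<sigma> 1) * \<beta> (v ! \<sigma> 2) (v ! \<sigma> 3)))"

definition cplx1 :: "form1 \<Rightarrow> form1 \<Rightarrow> form1" where
  "cplx1 \<alpha> \<beta> = (\<lambda>v. \<alpha> v + \<i> * \<beta> v)"

definition Omega :: form4 where
  "Omega = wedge22 (wedge11 (cplx1 (cof 4) (cof 0)) (cplx1 (cof 1) (cof 5)))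
                   (wedge11 (cplx1 (cof 2) (cof 6)) (cplx1 (cof 3) (cof 7)))"

definition omega :: form2 where
  "omega = (\<lambda>v w. wedge11 (cof 1) (cof 5) v w + wedge11 (cof 2) (cof 6) v w
                 + wedge11 (cof 3) (cof 7) v w + wedge11 (cof 4) (cof 0) v w)"

definition Phi :: "real \<Rightarrow> form4" where
  "Phi \<tau> = (\<lambda>v0 v1 v2 v3.
      complex_of_real (cosh (2 * \<tau>) * Re (Omega v0 v1 v2 v3))
      - (1/2) * wedge22 omega omega v0 v1 v2 v3
      + \<i> * complex_of_real (sinh (2 * \<tau>) * Im (Omega v0 v1 v2 v3)))"

definition pull2 :: "real^8^8 \<Rightarrow> form2 \<Rightarrow> form2" where
  "pull2 A \<phi> = (\<lambda>v w. \<phi> (A *v v) (A *v w))"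

definition pull4 :: "real^8^8 \<Rightarrow> form4 \<Rightarrow> form4" where
  "pull4 A \<phi> = (\<lambda>v0 v1 v2 v3. \<phi> (A *v v0) (A *v v1) (A *v v2) (A *v v3))"

definition stab4 :: "form4 \<Rightarrow> (real^8^8) set" where
  "stab4 \<phi> = {A. invertible A \<and> pull4 A \<phi> = \<phi>}"

definition SU4 :: "(real^8^8) set" where
  "SU4 = {A. invertible A \<and> (\<forall>v w. (A *v v) \<bullet> (A *v w) = v \<bullet> w)
            \<and> pull2 A omega = omega \<and> pull4 A Omega = Omega}"

end

theory Submission
  imports Defs
begin

text \<open>Identify \<open>\<real>\<^sup>8\<close> with \<open>\<complex>\<^sup>4\<close> through \<open>z\<^sub>0 = x\<^sub>4 + i x\<^sub>0\<close>, \<open>z\<^sub>1 = x\<^sub>1 + i x\<^sub>5\<close>,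
  \<open>z\<^sub>2 = x\<^sub>2 + i x\<^sub>6\<close>, \<open>z\<^sub>3 = x\<^sub>3 + i x\<^sub>7\<close>. Then \<open>\<Omega>\<close> is the determinant of the complex coordinates,
  multiplication by \<open>i\<close> is a real linear map \<open>J\<close>, and \<open>\<omega>(x, J y)\<close> is the Euclidean inner product.

  Let \<open>A\<close> fix \<open>\<Phi>\<^sub>\<tau>\<close>. As \<open>sinh 2\<tau> \<noteq> 0\<close>, \<open>A\<close> fixes \<open>Im \<Omega>\<close>, and hence also \<open>cosh 2\<tau> Re \<Omega> - \<omega>\<and>\<omega>/2\<close>.
  Since \<open>Im \<Omega>(u, w, -, -) = 0\<close> exactly when \<open>w \<in> \<complex>u\<close>, the map \<open>A J A\<^sup>-\<^sup>1\<close> preserves every complex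
  line, so it is multiplication by a constant \<open>\<mu>\<close> with \<open>\<mu>\<^sup>2 = -1\<close>: \<open>A\<close> commutes or anticommutes
  with \<open>J\<close>. If it anticommuted, it would send \<open>Re \<Omega>\<close> to \<open>-Re \<Omega>\<close>, and \<open>2 cosh 2\<tau> Re \<Omega>\<close>, of
  type (4,0)+(0,4), would be a difference of two forms \<open>\<eta>\<and>\<eta>/2\<close> with \<open>J\<close>-invariant \<open>\<eta>\<close>, which
  are of type (2,2). So \<open>A\<close> is complex linear; then it fixes \<open>\<Omega>\<close> and thus \<open>\<omega>\<and>\<omega>\<close>. The
  hermitian matrix of the pulled-back \<open>\<omega>\<close> then has positive diagonal and the same \<open>2\<times>2\<close> minors
  as the identity matrix, so it is the identity: \<open>A\<close> preserves \<open>\<omega>\<close>, hence the metric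
  \<open>\<omega>(-, J -)\<close>.\<close>

lemma exhaust_8:
  fixes x :: 8
  shows "x = 0 \<or> x = 1 \<or> x = 2 \<or> x = 3 \<or> x = 4 \<or> x = 5 \<or> x = 6 \<or> x = 7"
proof (induct x)
  case (of_int z)
  then have "z = 0 \<or> z = 1 \<or> z = 2 \<or> z = 3 \<or> z = 4 \<or> z = 5 \<or> z = 6 \<or> z = 7"
    by fastforce
  then show ?case by auto
qed

lemma forall_8: "(\<forall>i::8. P i) \<longleftrightarrow> P 0 \<and> P 1 \<and> P 2 \<and> P 3 \<and> P 4 \<and> P 5 \<and> P 6 \<and> P 7"
  by (metis exhaust_8)

lemma UNIV_8: "UNIV = {0, 1, 2, 3, 4, 5, 6, 7 :: 8}"
  using forall_8[of "\<lambda>i. i \<in> {0, 1, 2, 3, 4, 5, 6, 7}"] by auto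

lemma inner_vec_8:
  "(x :: real^8) \<bullet> y = x$0 * y$0 + x$1 * y$1 + x$2 * y$2 + x$3 * y$3
     + x$4 * y$4 + x$5 * y$5 + x$6 * y$6 + x$7 * y$7"
  unfolding inner_vec_def UNIV_8 by (simp add: add.assoc)

lemma vec_8_eq_iff:
  "(x :: 'a^8) = y \<longleftrightarrow> x$0 = y$0 \<and> x$1 = y$1 \<and> x$2 = y$2 \<and> x$3 = y$3
     \<and> x$4 = y$4 \<and> x$5 = y$5 \<and> x$6 = y$6 \<and> x$7 = y$7"
  unfolding vec_eq_iff forall_8 ..

lemma sum_permutes_insert_sign:
  fixes F :: "('b \<Rightarrow> 'b) \<Rightarrow> 'a::comm_ring_1"
  assumes "finite S" "a \<notin> S"
  shows "(\<Sum>\<sigma>\<in>{\<sigma>. \<sigma> permutes insert a S}. of_int (sign \<sigma>) * F \<sigma>) =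
    (\<Sum>b\<in>insert a S. \<Sum>q\<in>{q. q permutes S}.
        of_int (sign q) * ((if a = b then 1 else -1) * F (Transposition.transpose a b \<circ> q)))"
  unfolding sum_over_permutations_insert[OF assms]
proof (intro sum.cong refl)
  fix b q assume "q \<in> {q. q permutes S}"
  then have "permutation q"
    using assms(1) permutation_permutes by blast
  then have "sign (Transposition.transpose a b \<circ> q) = sign (Transposition.transpose a b) * sign q"
    by (simp add: sign_compose permutation_swap_id)
  then show "of_int (sign (Transposition.transpose a b \<circ> q)) * F (Transposition.transpose a b \<circ> q) =
      of_int (sign q) * ((if a = b then 1 else -1) * F (Transposition.transpose a b \<circ> q))"
    by (simp add: sign_swap_id)
qed

lemma sum_permutes_4_sign:
  "(\<Sum>\<sigma>\<in>{\<sigma>. \<sigma> permutes {..<4::nat}}. of_int (sign \<sigma>) * G (\<sigma> 0) (\<sigma> 1) (\<sigma> 2) (\<sigma> 3)) =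
   (G 0 1 2 3 - G 0 1 3 2 - G 0 2 1 3 + G 0 2 3 1 + G 0 3 1 2 - G 0 3 2 1
  - G 1 0 2 3 + G 1 0 3 2 + G 1 2 0 3 - G 1 2 3 0 - G 1 3 0 2 + G 1 3 2 0
  + G 2 0 1 3 - G 2 0 3 1 - G 2 1 0 3 + G 2 1 3 0 + G 2 3 0 1 - G 2 3 1 0
  - G 3 0 1 2 + G 3 0 2 1 + G 3 1 0 2 - G 3 1 2 0 - G 3 2 0 1 + G 3 2 1 0 :: 'a::comm_ring_1)"
proof -
  have "{..<4::nat} = insert 0 (insert 1 (insert 2 (insert 3 {})))" by auto
  then show ?thesis
    apply (simp only:)
    apply (subst sum_permutes_insert_sign, simp, simp)
    apply (subst sum_permutes_insert_sign, simp, simp)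
    apply (subst sum_permutes_insert_sign, simp, simp)
    apply (subst sum_permutes_insert_sign, simp, simp)
    apply (simp add: permutes_empty Transposition.transpose_def)
    done
qed

lemma wedge22_eq: "wedge22 \<alpha> \<beta> v0 v1 v2 v3 = (1/4) * (
     \<alpha> v0 v1 * \<beta> v2 v3 - \<alpha> v0 v1 * \<beta> v3 v2 - \<alpha> v0 v2 * \<beta> v1 v3 + \<alpha> v0 v2 * \<beta> v3 v1
   + \<alpha> v0 v3 * \<beta> v1 v2 - \<alpha> v0 v3 * \<beta> v2 v1 - \<alpha> v1 v0 * \<beta> v2 v3 + \<alpha> v1 v0 * \<beta> v3 v2
   + \<alpha> v1 v2 * \<beta> v0 v3 - \<alpha> v1 v2 * \<beta> v3 v0 - \<alpha> v1 v3 * \<beta> v0 v2 + \<alpha> v1 v3 * \<beta> v2 v0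
   + \<alpha> v2 v0 * \<beta> v1 v3 - \<alpha> v2 v0 * \<beta> v3 v1 - \<alpha> v2 v1 * \<beta> v0 v3 + \<alpha> v2 v1 * \<beta> v3 v0
   + \<alpha> v2 v3 * \<beta> v0 v1 - \<alpha> v2 v3 * \<beta> v1 v0 - \<alpha> v3 v0 * \<beta> v1 v2 + \<alpha> v3 v0 * \<beta> v2 v1
   + \<alpha> v3 v1 * \<beta> v0 v2 - \<alpha> v3 v1 * \<beta> v2 v0 - \<alpha> v3 v2 * \<beta> v0 v1 + \<alpha> v3 v2 * \<beta> v1 v0)"
  unfolding wedge22_def Let_def
  using sum_permutes_4_sign[of "\<lambda>i j k l. \<alpha> ([v0, v1, v2, v3] ! i) ([v0, v1, v2, v3] ! j)
      * \<beta> ([v0, v1, v2, v3] ! k) ([v0, v1, v2, v3] ! l)"]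
  by (simp add: mult.assoc)

lemma wedge22_self:
  assumes "\<And>x y. \<eta> y x = - \<eta> x y"
  shows "wedge22 \<eta> \<eta> v0 v1 v2 v3 = 2 * (\<eta> v0 v1 * \<eta> v2 v3 - \<eta> v0 v2 * \<eta> v1 v3 + \<eta> v0 v3 * \<eta> v1 v2)"
  unfolding wedge22_eq assms[of v0 v1] assms[of v0 v2] assms[of v0 v3] assms[of v1 v2]
    assms[of v1 v3] assms[of v2 v3]
  by algebra

section \<open>Complex coordinates\<close>

text \<open>Only \<open>k < 4\<close> is meaningful: all \<open>k \<ge> 3\<close> give \<open>z\<^sub>3\<close>.\<close>

definition zcoord :: "real^8 \<Rightarrow> nat \<Rightarrow> complex" where
  "zcoord x k = (if k = 0 then Complex (x$4) (x$0) else if k = 1 then Complex (x$1) (x$5)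
     else if k = 2 then Complex (x$2) (x$6) else Complex (x$3) (x$7))"

definition of_zcoord :: "(nat \<Rightarrow> complex) \<Rightarrow> real^8" where
  "of_zcoord c = (\<chi> i. if i = 0 then Im (c 0) else if i = 1 then Re (c 1) else if i = 2 then Re (c 2)
     else if i = 3 then Re (c 3) else if i = 4 then Re (c 0) else if i = 5 then Im (c 1)
     else if i = 6 then Im (c 2) else Im (c 3))"

lemma zcoord_of_zcoord: "k < 4 \<Longrightarrow> zcoord (of_zcoord c) k = c k"
  by (auto simp: zcoord_def of_zcoord_def complex_eq_iff less_Suc_eq numeral_eq_Suc)

lemma zcoord_eqI:
  assumes "\<And>k. k < 4 \<Longrightarrow> zcoord x k = zcoord y k"
  shows "x = y"
proof -
  have "zcoord x 0 = zcoord y 0" "zcoord x 1 = zcoord y 1" "zcoord x 2 = zcoord y 2" "zcoord x 3 = zcoord y 3"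
    using assms by simp_all
  then show ?thesis
    by (simp add: zcoord_def complex_eq_iff vec_8_eq_iff)
qed

lemma zcoord_add [simp]: "zcoord (x + y) k = zcoord x k + zcoord y k"
  by (simp add: zcoord_def complex_eq_iff)

lemma zcoord_scaleR [simp]: "zcoord (c *\<^sub>R x) k = of_real c * zcoord x k"
  by (simp add: zcoord_def complex_eq_iff)

lemma zcoord_minus [simp]: "zcoord (- x) k = - zcoord x k"
  by (simp add: zcoord_def complex_eq_iff)

lemma zcoord_zero [simp]: "zcoord 0 k = 0"
  by (simp add: zcoord_def complex_eq_iff)

definition cscale :: "complex \<Rightarrow> real^8 \<Rightarrow> real^8" where
  "cscale \<mu> x = of_zcoord (\<lambda>k. \<mu> * zcoord x k)"

abbreviation J8 :: "real^8 \<Rightarrow> real^8" where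
  "J8 \<equiv> cscale \<i>"

lemma zcoord_cscale [simp]: "k < 4 \<Longrightarrow> zcoord (cscale \<mu> x) k = \<mu> * zcoord x k"
  by (simp add: cscale_def zcoord_of_zcoord)

lemma J8_components:
  "J8 x $ 0 = x$4" "J8 x $ 1 = - x$5" "J8 x $ 2 = - x$6" "J8 x $ 3 = - x$7"
  "J8 x $ 4 = - x$0" "J8 x $ 5 = x$1" "J8 x $ 6 = x$2" "J8 x $ 7 = x$3"
  by (simp_all add: cscale_def of_zcoord_def zcoord_def)

lemma cscale_cscale [simp]: "cscale \<mu> (cscale \<nu> x) = cscale (\<mu> * \<nu>) x"
  by (rule zcoord_eqI) simp

lemma cscale_minus_one [simp]: "cscale (-1) x = - x"
  by (rule zcoord_eqI) simp

lemma J8_J8: "J8 (J8 x) = - x"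
  by simp

lemma linear_cscale: "linear (cscale \<mu>)"
proof
  show "cscale \<mu> (x + y) = cscale \<mu> x + cscale \<mu> y" for x y
    by (rule zcoord_eqI) (simp add: algebra_simps)
  show "cscale \<mu> (c *\<^sub>R x) = c *\<^sub>R cscale \<mu> x" for c x
    by (rule zcoord_eqI) (simp add: algebra_simps)
qed

lemma cscale_cancel:
  assumes "cscale \<mu> x = cscale \<nu> x" "x \<noteq> 0"
  shows "\<mu> = \<nu>"
proof -
  obtain k where "k < 4" "zcoord x k \<noteq> 0"
    using \<open>x \<noteq> 0\<close> zcoord_eqI[of x 0] by auto
  with arg_cong[OF assms(1), of "\<lambda>y. zcoord y k"] show ?thesis by simp
qed

definition cbasis :: "nat \<Rightarrow> real^8" where
  "cbasis k = of_zcoord (\<lambda>j. if j = k then 1 else 0)"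

lemma zcoord_cbasis [simp]: "j < 4 \<Longrightarrow> zcoord (cbasis k) j = (if j = k then 1 else 0)"
  by (simp add: cbasis_def zcoord_of_zcoord)

lemma cbasis_axis:
  "cbasis 0 = axis 4 1" "cbasis 1 = axis 1 1" "cbasis 2 = axis 2 1" "cbasis 3 = axis 3 1"
  "J8 (cbasis 0) = axis 0 1" "J8 (cbasis 1) = axis 5 1" "J8 (cbasis 2) = axis 6 1" "J8 (cbasis 3) = axis 7 1"
  by (simp_all add: vec_8_eq_iff axis_def cbasis_def cscale_def of_zcoord_def zcoord_def)

lemma axis_eq_cbasis_or_J8_cbasis: "\<exists>k<4. axis a 1 = cbasis k \<or> axis a 1 = J8 (cbasis k)"
  using exhaust_8[of a] by (elim disjE) (force simp: cbasis_axis[symmetric])+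

section \<open>The complex volume form\<close>

definition det4 ::
    "(nat \<Rightarrow> complex) \<Rightarrow> (nat \<Rightarrow> complex) \<Rightarrow> (nat \<Rightarrow> complex) \<Rightarrow> (nat \<Rightarrow> complex) \<Rightarrow> complex" where
  "det4 a b c d =
   a 0 * b 1 * c 2 * d 3 - a 0 * b 1 * c 3 * d 2 - a 0 * b 2 * c 1 * d 3 + a 0 * b 2 * c 3 * d 1
 + a 0 * b 3 * c 1 * d 2 - a 0 * b 3 * c 2 * d 1 - a 1 * b 0 * c 2 * d 3 + a 1 * b 0 * c 3 * d 2
 + a 1 * b 2 * c 0 * d 3 - a 1 * b 2 * c 3 * d 0 - a 1 * b 3 * c 0 * d 2 + a 1 * b 3 * c 2 * d 0
 + a 2 * b 0 * c 1 * d 3 - a 2 * b 0 * c 3 * d 1 - a 2 * b 1 * c 0 * d 3 + a 2 * b 1 * c 3 * d 0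
 + a 2 * b 3 * c 0 * d 1 - a 2 * b 3 * c 1 * d 0 - a 3 * b 0 * c 1 * d 2 + a 3 * b 0 * c 2 * d 1
 + a 3 * b 1 * c 0 * d 2 - a 3 * b 1 * c 2 * d 0 - a 3 * b 2 * c 0 * d 1 + a 3 * b 2 * c 1 * d 0"

lemma Omega_eq_det4: "Omega v0 v1 v2 v3 = det4 (zcoord v0) (zcoord v1) (zcoord v2) (zcoord v3)"
proof -
  have "cplx1 (cof 4) (cof 0) v = zcoord v 0" "cplx1 (cof 1) (cof 5) v = zcoord v 1"
       "cplx1 (cof 2) (cof 6) v = zcoord v 2" "cplx1 (cof 3) (cof 7) v = zcoord v 3" for v
    by (simp_all add: cplx1_def cof_def zcoord_def Complex_eq)
  then show ?thesis
    unfolding Omega_def wedge22_eq wedge11_def det4_def by (simp add: algebra_simps)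
qed

lemma Omega_cscale:
  "Omega (cscale \<mu> x0) x1 x2 x3 = \<mu> * Omega x0 x1 x2 x3"
  "Omega x0 (cscale \<mu> x1) x2 x3 = \<mu> * Omega x0 x1 x2 x3"
  "Omega x0 x1 (cscale \<mu> x2) x3 = \<mu> * Omega x0 x1 x2 x3"
  "Omega x0 x1 x2 (cscale \<mu> x3) = \<mu> * Omega x0 x1 x2 x3"
  by (simp_all add: Omega_eq_det4 det4_def algebra_simps)

lemma Omega_uminus: "Omega (- x0) x1 x2 x3 = - Omega x0 x1 x2 x3"
  using Omega_cscale(1)[of "-1" x0] by simp

lemma Omega_J8_self: "Omega u (J8 u) x y = 0"
  by (simp add: Omega_eq_det4 det4_def algebra_simps)

lemma Re_Omega_eq_Im_Omega_J8: "Re (Omega x0 x1 x2 x3) = Im (Omega (J8 x0) x1 x2 x3)"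
  by (simp add: Omega_cscale)

lemma Omega_cbasis: "Omega (cbasis 0) (cbasis 1) (cbasis 2) (cbasis 3) = 1"
  by (simp add: Omega_eq_det4 det4_def)

lemma det4_vanishing_imp_proportional:
  assumes det: "\<And>c d. det4 a b c d = 0" and "k < 4" "a k \<noteq> 0"
  shows "\<exists>\<mu>. \<forall>j<4. b j = \<mu> * a j"
proof -
  define e :: "nat \<Rightarrow> nat \<Rightarrow> complex" where "e m n = (if n = m then 1 else 0)" for m n
  have "det4 a b (e 2) (e 3) = 0" "det4 a b (e 1) (e 3) = 0" "det4 a b (e 1) (e 2) = 0"
       "det4 a b (e 0) (e 3) = 0" "det4 a b (e 0) (e 2) = 0" "det4 a b (e 0) (e 1) = 0"
    using det by auto
  then have "a 0 * b 1 = a 1 * b 0" "a 0 * b 2 = a 2 * b 0" "a 0 * b 3 = a 3 * b 0"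
            "a 1 * b 2 = a 2 * b 1" "a 1 * b 3 = a 3 * b 1" "a 2 * b 3 = a 3 * b 2"
    by (simp_all add: det4_def e_def algebra_simps)
  then have minor: "a i * b j = a j * b i" if "i < 4" "j < 4" for i j
    using that by (auto simp: less_Suc_eq numeral_eq_Suc algebra_simps)
  have "b j = b k / a k * a j" if "j < 4" for j
    using minor[OF \<open>k < 4\<close> that] \<open>a k \<noteq> 0\<close> by (simp add: field_simps)
  then show ?thesis by blast
qed

lemma Im_Omega_vanishing_imp_cscale:
  assumes "u \<noteq> 0" and Im0: "\<And>x y. Im (Omega u w x y) = 0"
  shows "\<exists>\<mu>. w = cscale \<mu> u"
proof -
  have "Omega u w x y = 0" for x y
    using Im0[of x y] Im0[of "J8 x" y] by (simp add: Omega_cscale complex_eq_iff)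
  then have "det4 (zcoord u) (zcoord w) c d = 0" for c d
    using Omega_eq_det4[of u w "of_zcoord c" "of_zcoord d"] by (simp add: det4_def zcoord_of_zcoord)
  moreover obtain k where "k < 4" "zcoord u k \<noteq> 0"
    using \<open>u \<noteq> 0\<close> zcoord_eqI[of u 0] by auto
  ultimately obtain \<mu> where "\<forall>j<4. zcoord w j = \<mu> * zcoord u j"
    using det4_vanishing_imp_proportional by blast
  then have "w = cscale \<mu> u"
    by (intro zcoord_eqI) simp
  then show ?thesis ..
qed

section \<open>Maps preserving all complex lines\<close>

definition on_complex_axis :: "real^8 \<Rightarrow> nat \<Rightarrow> bool" where
  "on_complex_axis v k \<longleftrightarrow> k < 4 \<and> zcoord v k \<noteq> 0 \<and> (\<forall>j<4. j \<noteq> k \<longrightarrow> zcoord v j = 0)"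

lemma cscale_factor_add:
  assumes "linear T" and m: "\<And>v. T v = cscale (m v) v"
    and "k < 4" "zcoord v k \<noteq> 0" "zcoord w k = 0"
  shows "m (v + w) = m v"
proof -
  have "m (v + w) * zcoord v k = zcoord (T (v + w)) k"
    using \<open>k < 4\<close> \<open>zcoord w k = 0\<close> by (simp add: m[of "v + w"])
  also have "\<dots> = m v * zcoord v k"
    using \<open>k < 4\<close> \<open>zcoord w k = 0\<close> by (simp add: linear_add[OF \<open>linear T\<close>] m[of v] m[of w])
  finally show ?thesis
    using \<open>zcoord v k \<noteq> 0\<close> by simp
qed

lemma complex_homothety:
  assumes "linear T" and "\<And>v. \<exists>\<mu>. T v = cscale \<mu> v"
  shows "\<exists>\<mu>. T = cscale \<mu>"
proof -
  obtain m where m: "\<And>v. T v = cscale (m v) v"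
    using assms(2) by metis
  have distinct_axes: "m v = m w" if "on_complex_axis v k" "on_complex_axis w j" "k \<noteq> j" for v w k j
  proof -
    have "m (v + w) = m v"
      using that by (intro cscale_factor_add[OF \<open>linear T\<close> m, of k]) (auto simp: on_complex_axis_def)
    moreover have "m (w + v) = m w"
      using that by (intro cscale_factor_add[OF \<open>linear T\<close> m, of j]) (auto simp: on_complex_axis_def)
    ultimately show ?thesis by (simp add: add.commute)
  qed
  have any_axes: "m v = m w" if "on_complex_axis v k" "on_complex_axis w j" for v w k j
  proof (cases "k = j")
    case True
    define i where "i = (if k = 0 then 1 else 0 :: nat)"
    have "on_complex_axis (cbasis i) i" "i \<noteq> k"
      by (simp_all add: i_def on_complex_axis_def)
    with that True show ?thesis
      using distinct_axes by metis
  qed (use that distinct_axes in blast)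
  have "T = cscale (m (axis 0 1))"
  proof (rule linear_eq_stdbasis[OF \<open>linear T\<close> linear_cscale])
    fix b :: "real^8" assume "b \<in> Basis"
    then obtain a where "b = axis a 1"
      using axis_inverse by blast
    moreover have "on_complex_axis (cbasis k) k" "on_complex_axis (J8 (cbasis k)) k" if "k < 4" for k
      using that by (simp_all add: on_complex_axis_def)
    ultimately show "T b = cscale (m (axis 0 1)) b"
      using m any_axes axis_eq_cbasis_or_J8_cbasis by metis
  qed
  then show ?thesis ..
qed

definition invariant4 :: "real^8^8 \<Rightarrow> (real^8 \<Rightarrow> real^8 \<Rightarrow> real^8 \<Rightarrow> real^8 \<Rightarrow> 'a) \<Rightarrow> bool" where
  "invariant4 A \<phi> \<longleftrightarrow> (\<forall>v0 v1 v2 v3. \<phi> (A *v v0) (A *v v1) (A *v v2) (A *v v3) = \<phi> v0 v1 v2 v3)"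

lemma J8_commute_or_anticommute_if_invariant_Im_Omega:
  assumes "invertible A" and "invariant4 A (\<lambda>v0 v1 v2 v3. Im (Omega v0 v1 v2 v3))"
  shows "(\<forall>u. A *v J8 u = J8 (A *v u)) \<or> (\<forall>u. A *v J8 u = - J8 (A *v u))"
proof -
  note Im_inv = assms(2)[unfolded invariant4_def, rule_format]
  obtain B where "A ** B = mat 1" "B ** A = mat 1"
    using \<open>invertible A\<close> unfolding invertible_def by blast
  then have AB: "A *v (B *v x) = x" and BA: "B *v (A *v x) = x" for x
    by (simp_all add: matrix_vector_mul_assoc)
  define T where "T v = A *v J8 (B *v v)" for v
  have "linear T"
    unfolding T_def using linear_compose[OF linear_compose[OF matrix_vector_mul_linear linear_cscale]
        matrix_vector_mul_linear] by (simp add: o_def)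
  have "\<exists>\<mu>. T v = cscale \<mu> v" for v
  proof (cases "v = 0")
    case True
    then show ?thesis
      by (metis linear_0[OF \<open>linear T\<close>] linear_0[OF linear_cscale])
  next
    case False
    have "Im (Omega v (T v) x y) = Im (Omega (B *v v) (J8 (B *v v)) (B *v x) (B *v y))" for x y
      using Im_inv[of "B *v v" "J8 (B *v v)" "B *v x" "B *v y"] by (simp add: T_def AB)
    with False show ?thesis
      by (intro Im_Omega_vanishing_imp_cscale) (simp_all add: Omega_J8_self)
  qed
  with \<open>linear T\<close> obtain \<mu> where T: "T = cscale \<mu>"
    using complex_homothety by blast
  have "T (T v) = - v" for v
    by (simp add: T_def BA AB linear_neg[OF matrix_vector_mul_linear])
  then have "cscale (\<mu> * \<mu>) (axis 0 1) = cscale (\<i> * \<i>) (axis 0 1)"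
    by (simp add: T)
  then have "\<mu> * \<mu> = \<i> * \<i>"
    by (rule cscale_cancel) simp
  then have "\<mu> = \<i> \<or> \<mu> = - \<i>"
    by (simp only: square_eq_iff)
  moreover have "A *v J8 u = cscale \<mu> (A *v u)" for u
    using fun_cong[OF T, of "A *v u"] by (simp add: T_def BA)
  moreover have "cscale (- \<i>) x = - J8 x" for x
    by (rule zcoord_eqI) simp
  ultimately show ?thesis by auto
qed

definition omega_real :: "real^8 \<Rightarrow> real^8 \<Rightarrow> real" where
  "omega_real x y = x$1 * y$5 - x$5 * y$1 + x$2 * y$6 - x$6 * y$2 + x$3 * y$7 - x$7 * y$3
     + x$4 * y$0 - x$0 * y$4"

lemma omega_eq_omega_real: "omega x y = of_real (omega_real x y)"
  by (simp add: omega_def wedge11_def cof_def omega_real_def)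

lemma omega_real_antisym: "omega_real y x = - omega_real x y"
  by (simp add: omega_real_def)

lemma omega_real_J8: "omega_real (J8 x) (J8 y) = omega_real x y"
  by (simp add: omega_real_def J8_components algebra_simps)

lemma omega_real_J8_right: "omega_real x (J8 y) = x \<bullet> y"
  by (simp add: omega_real_def J8_components inner_vec_8 algebra_simps)

lemma bilinear_omega_real: "bilinear omega_real"
  unfolding bilinear_def by (auto intro!: linearI simp: omega_real_def algebra_simps)

lemma bilinear_compose_linear:
  assumes "bilinear h" "linear f" "linear g"
  shows "bilinear (\<lambda>x y. h (f x) (g y))"
  using assms unfolding bilinear_def
  by (auto intro: linear_compose[of g, unfolded o_def] linear_compose[of f, unfolded o_def])

lemma bilinear_pullback_omega_real: "bilinear (\<lambda>x y. omega_real (A *v x) (A *v y))"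
  using bilinear_compose_linear[OF bilinear_omega_real matrix_vector_mul_linear matrix_vector_mul_linear] .

lemma J8_invariant_form_swap:
  assumes "bilinear \<eta>" "\<And>x y. \<eta> (J8 x) (J8 y) = \<eta> x y"
  shows "\<eta> (J8 x) y = - \<eta> x (J8 y)"
  using assms(2)[of "J8 x" y] by (simp add: bilinear_lneg[OF assms(1)])

definition wedge_sq_half :: "('v \<Rightarrow> 'v \<Rightarrow> real) \<Rightarrow> 'v \<Rightarrow> 'v \<Rightarrow> 'v \<Rightarrow> 'v \<Rightarrow> real" where
  "wedge_sq_half \<eta> v0 v1 v2 v3 = \<eta> v0 v1 * \<eta> v2 v3 - \<eta> v0 v2 * \<eta> v1 v3 + \<eta> v0 v3 * \<eta> v1 v2"

definition Re_Phi :: "real \<Rightarrow> real^8 \<Rightarrow> real^8 \<Rightarrow> real^8 \<Rightarrow> real^8 \<Rightarrow> real" where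
  "Re_Phi \<tau> v0 v1 v2 v3 = cosh (2 * \<tau>) * Re (Omega v0 v1 v2 v3) - wedge_sq_half omega_real v0 v1 v2 v3"

lemma Phi_eq: "Phi \<tau> v0 v1 v2 v3 = Complex (Re_Phi \<tau> v0 v1 v2 v3) (sinh (2 * \<tau>) * Im (Omega v0 v1 v2 v3))"
proof -
  have omega_antisym: "omega y x = - omega x y" for x y
    by (simp add: omega_eq_omega_real omega_real_def)
  have "wedge22 omega omega v0 v1 v2 v3 = of_real (2 * wedge_sq_half omega_real v0 v1 v2 v3)"
    unfolding wedge22_self[OF omega_antisym] by (simp add: omega_eq_omega_real wedge_sq_half_def)
  then show ?thesis
    by (simp add: Phi_def Re_Phi_def complex_eq_iff)
qed

lemma stab4_Phi_iff:
  assumes "\<tau> \<noteq> 0"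
  shows "A \<in> stab4 (Phi \<tau>) \<longleftrightarrow> invertible A \<and>
    invariant4 A (\<lambda>v0 v1 v2 v3. Im (Omega v0 v1 v2 v3)) \<and> invariant4 A (Re_Phi \<tau>)"
proof -
  have "sinh (2 * \<tau>) \<noteq> 0"
    using assms by simp
  then show ?thesis
    by (auto simp: stab4_def invariant4_def fun_eq_iff pull4_def Phi_eq)
qed

section \<open>Antilinear maps do not fix \<open>\<Phi>\<^sub>\<tau>\<close>\<close>

text \<open>Summing over the insertions of \<open>J\<close> into an even number of slots, with a sign \<open>-1\<close> for
  each pair, multiplies forms of type (4,0)+(0,4) by 8 and annihilates those of type (2,2).\<close>

definition J8_pair_sum ::
    "(real^8 \<Rightarrow> real^8 \<Rightarrow> real^8 \<Rightarrow> real^8 \<Rightarrow> real) \<Rightarrow> real^8 \<Rightarrow> real^8 \<Rightarrow> real^8 \<Rightarrow> real^8 \<Rightarrow> real" where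
  "J8_pair_sum \<phi> x0 x1 x2 x3 = \<phi> x0 x1 x2 x3
     - \<phi> (J8 x0) (J8 x1) x2 x3 - \<phi> (J8 x0) x1 (J8 x2) x3 - \<phi> (J8 x0) x1 x2 (J8 x3)
     - \<phi> x0 (J8 x1) (J8 x2) x3 - \<phi> x0 (J8 x1) x2 (J8 x3) - \<phi> x0 x1 (J8 x2) (J8 x3)
     + \<phi> (J8 x0) (J8 x1) (J8 x2) (J8 x3)"

lemma J8_pair_sum_wedge_sq_half:
  assumes "bilinear \<eta>" and J8_inv: "\<And>x y. \<eta> (J8 x) (J8 y) = \<eta> x y"
  shows "J8_pair_sum (wedge_sq_half \<eta>) x0 x1 x2 x3 = 0"
  unfolding J8_pair_sum_def wedge_sq_half_def J8_inv J8_invariant_form_swap[OF assms] J8_J8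
    bilinear_rneg[OF assms(1)]
  by (simp add: algebra_simps)

lemma J8_pair_sum_Re_Omega:
  "J8_pair_sum (\<lambda>y0 y1 y2 y3. Re (Omega y0 y1 y2 y3)) x0 x1 x2 x3 = 8 * Re (Omega x0 x1 x2 x3)"
  by (simp add: J8_pair_sum_def Omega_cscale)

lemma not_J8_anticommute_if_invariant_Phi:
  assumes "invariant4 A (\<lambda>v0 v1 v2 v3. Im (Omega v0 v1 v2 v3))" and "invariant4 A (Re_Phi \<tau>)"
    and anti: "\<And>u. A *v J8 u = - J8 (A *v u)"
  shows False
proof -
  note Im_inv = assms(1)[unfolded invariant4_def, rule_format]
  note Re_inv = assms(2)[unfolded invariant4_def Re_Phi_def, rule_format]
  define \<eta> where "\<eta> = (\<lambda>x y. omega_real (A *v x) (A *v y))"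
  have Re_flip: "Re (Omega (A *v v0) (A *v v1) (A *v v2) (A *v v3)) = - Re (Omega v0 v1 v2 v3)"
    for v0 v1 v2 v3
  proof -
    have "J8 (A *v v0) = - (A *v J8 v0)"
      using anti[of v0] by simp
    then have "Re (Omega (A *v v0) (A *v v1) (A *v v2) (A *v v3))
        = - Im (Omega (A *v J8 v0) (A *v v1) (A *v v2) (A *v v3))"
      by (simp add: Re_Omega_eq_Im_Omega_J8 Omega_uminus)
    also have "\<dots> = - Re (Omega v0 v1 v2 v3)"
      by (simp add: Im_inv Re_Omega_eq_Im_Omega_J8)
    finally show ?thesis .
  qed
  have diff: "2 * cosh (2 * \<tau>) * Re (Omega v0 v1 v2 v3)
      = wedge_sq_half omega_real v0 v1 v2 v3 - wedge_sq_half \<eta> v0 v1 v2 v3" for v0 v1 v2 v3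
    using Re_inv[of v0 v1 v2 v3] by (simp add: Re_flip \<eta>_def wedge_sq_half_def algebra_simps)
  have "bilinear \<eta>" "\<eta> (J8 x) (J8 y) = \<eta> x y" for x y
    using bilinear_pullback_omega_real
    by (simp_all add: \<eta>_def anti bilinear_lneg[OF bilinear_omega_real]
        bilinear_rneg[OF bilinear_omega_real] omega_real_J8)
  then have "J8_pair_sum (wedge_sq_half \<eta>) x0 x1 x2 x3 = 0" for x0 x1 x2 x3
    by (rule J8_pair_sum_wedge_sq_half)
  moreover have "2 * cosh (2 * \<tau>) * J8_pair_sum (\<lambda>y0 y1 y2 y3. Re (Omega y0 y1 y2 y3)) x0 x1 x2 x3
      = J8_pair_sum (wedge_sq_half omega_real) x0 x1 x2 x3 - J8_pair_sum (wedge_sq_half \<eta>) x0 x1 x2 x3"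
    for x0 x1 x2 x3
    unfolding J8_pair_sum_def right_diff_distrib distrib_left diff by linarith
  ultimately have "cosh (2 * \<tau>) * J8_pair_sum (\<lambda>y0 y1 y2 y3. Re (Omega y0 y1 y2 y3))
      (cbasis 0) (cbasis 1) (cbasis 2) (cbasis 3) = 0"
    by (simp add: J8_pair_sum_wedge_sq_half[OF bilinear_omega_real omega_real_J8])
  with Omega_cbasis show False
    by (simp add: J8_pair_sum_Re_Omega)
qed

section \<open>Complex linear maps fixing \<open>\<omega>\<and>\<omega>\<close>\<close>

definition herm_form :: "(real^8 \<Rightarrow> real^8 \<Rightarrow> real) \<Rightarrow> real^8 \<Rightarrow> real^8 \<Rightarrow> complex" where
  "herm_form \<eta> x y = Complex (\<eta> x (J8 y)) (\<eta> x y)"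

lemma herm_form_minor:
  assumes "bilinear \<eta>" and antisym: "\<And>x y. \<eta> y x = - \<eta> x y"
    and J8_inv: "\<And>x y. \<eta> (J8 x) (J8 y) = \<eta> x y"
  shows "herm_form \<eta> a a * herm_form \<eta> b c - herm_form \<eta> a c * herm_form \<eta> b a =
    Complex (wedge_sq_half \<eta> a (J8 a) b (J8 c)) (wedge_sq_half \<eta> a (J8 a) b c)"
proof -
  note swap = J8_invariant_form_swap[OF \<open>bilinear \<eta>\<close> J8_inv]
  have "\<eta> x (J8 y) = \<eta> y (J8 x)" for x y
    using antisym[of "J8 y" x] swap[of y x] by simp
  moreover have "\<eta> a a = 0"
    using antisym[of a a] by simp
  ultimately have "\<eta> a a = 0" "\<eta> b a = - \<eta> a b" "\<eta> b (J8 a) = \<eta> a (J8 b)" "\<eta> c (J8 a) = \<eta> a (J8 c)"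
    using antisym by metis+
  then show ?thesis
    unfolding herm_form_def wedge_sq_half_def J8_inv swap
    by (simp add: complex_eq_iff bilinear_rneg[OF \<open>bilinear \<eta>\<close>] algebra_simps)
qed

lemma herm_form_omega_real:
  "herm_form omega_real x y = cnj (zcoord x 0) * zcoord y 0 + cnj (zcoord x 1) * zcoord y 1
     + cnj (zcoord x 2) * zcoord y 2 + cnj (zcoord x 3) * zcoord y 3"
  unfolding herm_form_def omega_real_J8_right
  by (simp add: inner_vec_8 omega_real_def zcoord_def complex_eq_iff algebra_simps)

lemma herm_form_omega_real_cbasis:
  "j < 4 \<Longrightarrow> k < 4 \<Longrightarrow> herm_form omega_real (cbasis j) (cbasis k) = (if j = k then 1 else 0)"
  by (auto simp: herm_form_omega_real less_Suc_eq numeral_eq_Suc)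

lemma exists_third_index: "\<exists>i<4. i \<noteq> j \<and> i \<noteq> (k::nat)"
  by (rule exI[of _ "if 0 \<notin> {j, k} then 0 else if 1 \<notin> {j, k} then 1 else 2"]) auto

lemma minors_eq_id_imp_eq_id:
  fixes h :: "nat \<Rightarrow> nat \<Rightarrow> complex"
  assumes minor: "\<And>i j k. i < 4 \<Longrightarrow> j < 4 \<Longrightarrow> k < 4 \<Longrightarrow>
      h i i * h j k - h i k * h j i = (if j = k \<and> i \<noteq> j then 1 else 0)"
    and pos: "\<And>i. i < 4 \<Longrightarrow> Im (h i i) = 0 \<and> Re (h i i) > 0"
    and "j < 4" "k < 4"
  shows "h j k = (if j = k then 1 else 0)"
proof -
  have off_diag: "h j k = 0" if "j < 4" "k < 4" "j \<noteq> k" for j k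
  proof -
    obtain i where i: "i < 4" "i \<noteq> j" "i \<noteq> k"
      using exists_third_index by blast
    have e1: "h i i * h j k = h i k * h j i" and e2: "h j j * h i k = h j k * h i j"
      and e3: "h i i * h j j - h i j * h j i = 1"
      using minor[of i j k] minor[of j i k] minor[of i j j] i that by simp_all
    have "h j k * h i k = h j k * h i k * (h i i * h j j - h i j * h j i)"
      using e3 by simp
    also have "\<dots> = (h i i * h j k) * (h j j * h i k) - h j k * h i k * h i j * h j i"
      by (simp add: algebra_simps)
    also have "\<dots> = 0"
      unfolding e1 e2 by (simp add: algebra_simps)
    finally have "h j k * h i k = 0" .
    then have "h i i * (h j k * h j k) = 0"
      using e1 by (metis mult.assoc mult.commute mult_zero_right)
    moreover have "h i i \<noteq> 0"
      using pos[OF \<open>i < 4\<close>] by auto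
    ultimately show ?thesis by simp
  qed
  have diag: "h i i = 1" if "i < 4" for i
  proof -
    obtain l where "l < 4" "l \<noteq> i"
      using exists_third_index[of i i] by blast
    moreover obtain m where "m < 4" "m \<noteq> i" "m \<noteq> l"
      using exists_third_index[of i l] by blast
    ultimately have lm: "l < 4" "m < 4" "l \<noteq> i" "m \<noteq> i" "m \<noteq> l"
      by simp_all
    have prod: "h a a * h b b = 1" if "a < 4" "b < 4" "a \<noteq> b" for a b
      using minor[of a b b] off_diag[of a b] that by simp
    have "h i i * h i i = (h i i * h l l) * (h i i * h m m) * (h l l * h m m)"
      using prod[of l m] lm by (simp add: algebra_simps)
    then have "h i i * h i i = 1 * 1"
      using prod[of i l] prod[of i m] prod[of l m] lm \<open>i < 4\<close> by simp
    then have "h i i = 1 \<or> h i i = -1"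
      by (simp only: square_eq_iff)
    then show ?thesis
      using pos[OF \<open>i < 4\<close>] by auto
  qed
  show ?thesis
    using assms(3,4) diag off_diag by simp
qed

lemma J8_invariant_bilinear_eqI:
  assumes "bilinear f" "bilinear g"
    and f_inv: "\<And>x y. f (J8 x) (J8 y) = f x y" and g_inv: "\<And>x y. g (J8 x) (J8 y) = g x y"
    and eq: "\<And>j k. j < 4 \<Longrightarrow> k < 4 \<Longrightarrow> f (cbasis j) (cbasis k) = g (cbasis j) (cbasis k)"
    and eq_J8: "\<And>j k. j < 4 \<Longrightarrow> k < 4 \<Longrightarrow> f (cbasis j) (J8 (cbasis k)) = g (cbasis j) (J8 (cbasis k))"
  shows "f = g"
proof (rule bilinear_eq_stdbasis[OF assms(1,2)])
  have cbasis_cases: "\<exists>k<4. x = cbasis k \<or> x = J8 (cbasis k)" if "x \<in> Basis" for x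
    using axis_inverse[OF that] axis_eq_cbasis_or_J8_cbasis by blast
  fix a b :: "real^8" assume "a \<in> Basis" "b \<in> Basis"
  then obtain j k where "j < 4" "k < 4"
    and "a = cbasis j \<or> a = J8 (cbasis j)" "b = cbasis k \<or> b = J8 (cbasis k)"
    using cbasis_cases by metis
  moreover note swap = J8_invariant_form_swap[OF \<open>bilinear f\<close> f_inv]
    J8_invariant_form_swap[OF \<open>bilinear g\<close> g_inv]
    and neg = bilinear_rneg[OF \<open>bilinear f\<close>] bilinear_rneg[OF \<open>bilinear g\<close>]
  ultimately show "f a b = g a b"
    by (elim disjE) (simp_all only: eq eq_J8 swap J8_J8 neg minus_minus)
qed

lemma eq_omega_real_if_wedge_sq_half_eq:
  assumes "bilinear \<eta>" and antisym: "\<And>x y. \<eta> y x = - \<eta> x y"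
    and J8_inv: "\<And>x y. \<eta> (J8 x) (J8 y) = \<eta> x y"
    and pos: "\<And>k. k < 4 \<Longrightarrow> \<eta> (cbasis k) (J8 (cbasis k)) > 0"
    and "wedge_sq_half \<eta> = wedge_sq_half omega_real"
  shows "\<eta> = omega_real"
proof -
  let ?h = "\<lambda>j k. herm_form \<eta> (cbasis j) (cbasis k)"
  have "?h i i * ?h j k - ?h i k * ?h j i
      = herm_form omega_real (cbasis i) (cbasis i) * herm_form omega_real (cbasis j) (cbasis k)
        - herm_form omega_real (cbasis i) (cbasis k) * herm_form omega_real (cbasis j) (cbasis i)"
    for i j k
    unfolding herm_form_minor[OF assms(1-3)]
      herm_form_minor[OF bilinear_omega_real omega_real_antisym omega_real_J8] \<open>wedge_sq_half \<eta> = _\<close> ..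
  then have "?h i i * ?h j k - ?h i k * ?h j i = (if j = k \<and> i \<noteq> j then 1 else 0)"
    if "i < 4" "j < 4" "k < 4" for i j k
    using that by (simp add: herm_form_omega_real_cbasis)
  moreover have "Im (?h i i) = 0 \<and> Re (?h i i) > 0" if "i < 4" for i
    using antisym[of "cbasis i" "cbasis i"] pos[OF that] by (simp add: herm_form_def)
  ultimately have "?h j k = (if j = k then 1 else 0)" if "j < 4" "k < 4" for j k
    using that by (rule minors_eq_id_imp_eq_id)
  then have "?h j k = herm_form omega_real (cbasis j) (cbasis k)" if "j < 4" "k < 4" for j k
    using that by (simp add: herm_form_omega_real_cbasis)
  then have on_cbasis: "\<eta> (cbasis j) (cbasis k) = omega_real (cbasis j) (cbasis k)"
    "\<eta> (cbasis j) (J8 (cbasis k)) = omega_real (cbasis j) (J8 (cbasis k))"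
    if "j < 4" "k < 4" for j k
    using that unfolding herm_form_def by simp_all
  show ?thesis
    by (rule J8_invariant_bilinear_eqI[OF assms(1) bilinear_omega_real J8_inv])
      (simp_all add: omega_real_J8 on_cbasis)
qed

lemma SU4_if_J8_commute_and_invariant_Phi:
  assumes "invertible A" "invariant4 A (\<lambda>v0 v1 v2 v3. Im (Omega v0 v1 v2 v3))" "invariant4 A (Re_Phi \<tau>)"
    and comm: "\<And>u. A *v J8 u = J8 (A *v u)"
  shows "A \<in> SU4"
proof -
  note Im_inv = assms(2)[unfolded invariant4_def, rule_format]
  note Re_inv = assms(3)[unfolded invariant4_def Re_Phi_def, rule_format]
  have Re_Omega_inv: "Re (Omega (A *v v0) (A *v v1) (A *v v2) (A *v v3)) = Re (Omega v0 v1 v2 v3)"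
    for v0 v1 v2 v3
    by (simp add: Re_Omega_eq_Im_Omega_J8 comm[symmetric] Im_inv)
  define \<eta> where "\<eta> = (\<lambda>x y. omega_real (A *v x) (A *v y))"
  have \<eta>_J8: "\<eta> x (J8 y) = (A *v x) \<bullet> (A *v y)" for x y
    by (simp add: \<eta>_def comm omega_real_J8_right)
  have "\<eta> = omega_real"
  proof (rule eq_omega_real_if_wedge_sq_half_eq)
    show "bilinear \<eta>"
      unfolding \<eta>_def by (rule bilinear_pullback_omega_real)
    show "\<eta> y x = - \<eta> x y" for x y
      unfolding \<eta>_def by (rule omega_real_antisym)
    show "\<eta> (J8 x) (J8 y) = \<eta> x y" for x y
      by (simp add: \<eta>_def comm omega_real_J8)
    show "\<eta> (cbasis k) (J8 (cbasis k)) > 0" if "k < 4" for k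
    proof -
      have "cbasis k \<noteq> 0"
        using zcoord_cbasis[OF that, of k] by auto
      then have "A *v cbasis k \<noteq> 0"
        using \<open>invertible A\<close> by (metis invertible_left_inverse matrix_left_invertible_ker)
      then show ?thesis
        by (simp add: \<eta>_J8)
    qed
    show "wedge_sq_half \<eta> = wedge_sq_half omega_real"
    proof (intro ext)
      fix v0 v1 v2 v3
      show "wedge_sq_half \<eta> v0 v1 v2 v3 = wedge_sq_half omega_real v0 v1 v2 v3"
        using Re_inv[of v0 v1 v2 v3] unfolding Re_Omega_inv \<eta>_def wedge_sq_half_def by linarith
    qed
  qed
  then have "(A *v v) \<bullet> (A *v w) = v \<bullet> w" for v w
    using \<eta>_J8[of v w] by (simp add: omega_real_J8_right)
  moreover have "pull2 A omega = omega"
    using \<open>\<eta> = omega_real\<close> by (simp add: fun_eq_iff pull2_def omega_eq_omega_real \<eta>_def)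
  moreover have "pull4 A Omega = Omega"
    by (simp add: fun_eq_iff pull4_def complex_eq_iff Re_Omega_inv Im_inv)
  ultimately show ?thesis
    using \<open>invertible A\<close> by (simp add: SU4_def)
qed

lemma SU4_subset_stab4_Phi: "SU4 \<subseteq> stab4 (Phi \<tau>)"
proof
  fix A assume "A \<in> SU4"
  then have "invertible A" and "pull2 A omega = omega" "pull4 A Omega = Omega"
    by (auto simp: SU4_def)
  then have "omega_real (A *v x) (A *v y) = omega_real x y"
    and "Omega (A *v v0) (A *v v1) (A *v v2) (A *v v3) = Omega v0 v1 v2 v3" for x y v0 v1 v2 v3
    by (simp_all add: fun_eq_iff pull2_def pull4_def omega_eq_omega_real)
  with \<open>invertible A\<close> show "A \<in> stab4 (Phi \<tau>)"
    by (simp add: stab4_def fun_eq_iff pull4_def Phi_eq Re_Phi_def wedge_sq_half_def)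
qed

theorem mainTheorem7:
  fixes \<tau> :: real
  assumes "\<tau> \<noteq> 0"
  shows "stab4 (Phi \<tau>) = SU4"
proof
  show "stab4 (Phi \<tau>) \<subseteq> SU4"
  proof
    fix A assume "A \<in> stab4 (Phi \<tau>)"
    then have inv: "invertible A" and Im_inv: "invariant4 A (\<lambda>v0 v1 v2 v3. Im (Omega v0 v1 v2 v3))"
      and Re_inv: "invariant4 A (Re_Phi \<tau>)"
      using stab4_Phi_iff[OF assms] by blast+
    from J8_commute_or_anticommute_if_invariant_Im_Omega[OF inv Im_inv] show "A \<in> SU4"
    proof
      assume "\<forall>u. A *v J8 u = J8 (A *v u)"
      then show ?thesis
        using SU4_if_J8_commute_and_invariant_Phi[OF inv Im_inv Re_inv] by blast
    next
      assume "\<forall>u. A *v J8 u = - J8 (A *v u)"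
      then show ?thesis
        using not_J8_anticommute_if_invariant_Phi[OF Im_inv Re_inv] by blast
    qed
  qed
  show "SU4 \<subseteq> stab4 (Phi \<tau>)"
    by (rule SU4_subset_stab4_Phi)
qed

end
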